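(* For any positive integers $n$ and $p\ge2$, any (possibly randomized) one-way protocol for CHAIN$_p(n)$ (described in the context) with success probability at least $2/3$ must have communication complexity at least $n/(36p^2)$.
   Context: CHAIN$_p(n)$: there are $p$ players $P_1,\dots,P_p$. For each $i\in[p-1]$, player $P_i$ receives a bit string $x^i\in\{0,1\}^n$, and for each $i\in\{2,\dots,p\}$ player $P_i$ receives an index $t^i\in[n]$. It is promised that either $x^i_{t^{i+1}}=0$ for all $i\in[p-1]$ (the $0$-case) or $x^i_{t^{i+1}}=1$ for all $i\in[p-1]$ (the $1$-case); the goal is to decide which case holds. A one-way protocol consists of $p$ possibly randomized algorithms: player 1 computes a message $m_1$ from its input; for $i=2,\dots,p-1$ player $i$ computes $m_i$ from its input and $m_{i-1}$; player $p$ outputs a decision from its input and $m_{p-1}$. The communication complexity is the maximum length in bits of any $m_1,\dots,m_{p-1}$ over all inputs and randomness; the success probability is the probability (for every valid input) that the decision is correct. *)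

theory Defs
  imports "HOL-Probability.Probability_Mass_Function"
begin

text \<open>Players are numbered 1..p. Bit strings are bool lists of length n,
  indices are 0-based (t < n).
  - chain_first: player 1 maps x^1 to a distribution on messages m_1;
  - chain_mid i: player i (2 <= i <= p-1) maps (x^i, t^i, m_{i-1}) to a distribution on m_i;
  - chain_last: player p maps (t^p, m_{p-1}) to a distribution on the decision.\<close>

record chain_protocol =
  chain_first :: "bool list \<Rightarrow> bool list pmf"
  chain_mid   :: "nat \<Rightarrow> bool list \<Rightarrow> nat \<Rightarrow> bool list \<Rightarrow> bool list pmf"
  chain_last  :: "nat \<Rightarrow> bool list \<Rightarrow> bool pmf"

text \<open>Distribution of message m_i, for i >= 1, on input (xs, ts):
  xs i = x^i, ts i = t^i.\<close>
fun chain_msg :: "chain_protocol \<Rightarrow> (nat \<Rightarrow> bool list) \<Rightarrow> (nat \<Rightarrow> nat) \<Rightarrow> nat \<Rightarrow> bool list pmf" where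
  "chain_msg P xs ts 0 = return_pmf []"
| "chain_msg P xs ts (Suc 0) = chain_first P (xs 1)"
| "chain_msg P xs ts (Suc (Suc k)) =
     bind_pmf (chain_msg P xs ts (Suc k)) (chain_mid P (Suc (Suc k)) (xs (Suc (Suc k))) (ts (Suc (Suc k))))"

definition chain_output :: "chain_protocol \<Rightarrow> nat \<Rightarrow> (nat \<Rightarrow> bool list) \<Rightarrow> (nat \<Rightarrow> nat) \<Rightarrow> bool pmf" where
  "chain_output P p xs ts = bind_pmf (chain_msg P xs ts (p - 1)) (chain_last P (ts p))"

definition chain_input :: "nat \<Rightarrow> nat \<Rightarrow> (nat \<Rightarrow> bool list) \<Rightarrow> (nat \<Rightarrow> nat) \<Rightarrow> bool" where
  "chain_input p n xs ts \<longleftrightarrow> (\<forall>i\<in>{1..p-1}. length (xs i) = n) \<and> (\<forall>i\<in>{2..p}. ts i < n)"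

definition chain_case :: "nat \<Rightarrow> (nat \<Rightarrow> bool list) \<Rightarrow> (nat \<Rightarrow> nat) \<Rightarrow> bool \<Rightarrow> bool" where
  "chain_case p xs ts b \<longleftrightarrow> (\<forall>i\<in>{1..p-1}. xs i ! ts (i + 1) = b)"

definition chain_cost_le :: "chain_protocol \<Rightarrow> nat \<Rightarrow> nat \<Rightarrow> nat \<Rightarrow> bool" where
  "chain_cost_le P p n C \<longleftrightarrow>
     (\<forall>xs ts. chain_input p n xs ts \<longrightarrow>
        (\<forall>i\<in>{1..p-1}. \<forall>m\<in>set_pmf (chain_msg P xs ts i). length m \<le> C))"

text \<open>Success probability at least q on every valid (promise) input; the decision
  True means the 1-case.\<close>
definition chain_success :: "chain_protocol \<Rightarrow> nat \<Rightarrow> nat \<Rightarrow> real \<Rightarrow> bool" where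
  "chain_success P p n q \<longleftrightarrow>
     (\<forall>xs ts b. chain_input p n xs ts \<longrightarrow> chain_case p xs ts b \<longrightarrow>
        pmf (chain_output P p xs ts) b \<ge> q)"

end

theory Submission
  imports Defs "HOL-Probability.Hoeffding"
begin

text \<open>
  Hybrid argument. For \<open>\<beta> :: nat \<Rightarrow> bool\<close>, run the protocol on random inputs in which
  \<open>x\<^sup>i\<close> is uniform except that its bit at the uniform index \<open>t\<^sup>i\<^sup>+\<^sup>1\<close> is forced to
  \<open>\<beta> i\<close>. If \<open>\<beta>\<close> is constantly \<open>b\<close>, every such input is a promise input for \<open>b\<close>, so
  the output is \<open>b\<close> with probability at least 2/3. Switching \<open>\<beta>\<close> from all-False to
  all-True one player at a time thus moves the probability of output True by at least
  1/3 in \<open>p - 1\<close> steps. Each step only changes the bit that player \<open>k\<close> holds at a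
  random position of a uniform string, i.e. it is an instance of INDEX for the message
  \<open>m\<^sub>k\<close> of at most \<open>C\<close> bits. Combining the duality \<open>x z \<le> x ln x - x + e\<^sup>z\<close> with
  Hoeffding's bound on the Boolean cube, such a step moves any \<open>[0,1]\<close>-valued statistic
  by at most \<open>2 ln |S| / (n \<theta>) + \<theta> / 4\<close> for every \<open>\<theta> > 0\<close>, where \<open>S\<close> is the set of
  messages. With \<open>|S| \<le> 4\<^sup>C\<close> and \<open>\<theta> = 2 / (3 p)\<close> this forces \<open>C \<ge> n / (36 p\<^sup>2)\<close>.
\<close>

lemma exp_plus_exp_minus_le: "exp x + exp (-x) \<le> 2 * exp (x\<^sup>2 / 2)" for x :: real
proof -
  have nonneg: "exp y + exp (-y) \<le> 2 * exp (y\<^sup>2 / 2)" if "y \<ge> 0" for y :: real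
  proof -
    \<comment> \<open>Hoeffding's lemma for the fair coin on \<open>{0, 2 y}\<close>\<close>
    have "-(2*y) * (1/2) + ln (1 + (1/2) * (exp (2*y) - 1)) \<le> (2*y)\<^sup>2 / 8"
      using Hoeffdings_lemma_aux[of "2*y" "1/2"] that by simp
    hence "ln ((1 + exp (2*y)) / 2) \<le> y + y\<^sup>2 / 2"
      by (simp add: power2_eq_square field_simps)
    hence "(1 + exp (2*y)) / 2 \<le> exp (y + y\<^sup>2 / 2)"
      by (metis exp_le_cancel_iff exp_ln exp_gt_zero add_pos_pos zero_less_one half_gt_zero)
    hence "exp (-y) * ((1 + exp (2*y)) / 2) \<le> exp (-y) * exp (y + y\<^sup>2 / 2)"
      by (rule mult_left_mono) simp
    thus ?thesis
      by (simp add: field_simps flip: exp_add)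
  qed
  show ?thesis
    using nonneg[of x] nonneg[of "-x"] by (cases "x \<ge> 0") (simp_all add: add.commute)
qed

lemma mult_le_mult_ln_minus_plus_exp:
  fixes x z :: real
  assumes "x \<ge> 0"
  shows "x * z \<le> x * ln x - x + exp z"
proof (cases "x = 0")
  case False
  hence x: "x > 0" using assms by simp
  have "1 + (z - ln x) \<le> exp (z - ln x)" by (rule exp_ge_add_one_self)
  also have "\<dots> = exp z / x" using x by (simp add: exp_diff)
  finally show ?thesis using x by (simp add: field_simps)
qed simp

abbreviation bit_strings :: "nat \<Rightarrow> bool list set" where
  "bit_strings n \<equiv> {y. length y = n}"

lemma finite_bit_strings: "finite (bit_strings n)"
  using finite_lists_length_eq[of "UNIV :: bool set" n] by simp

lemma card_bit_strings: "card (bit_strings n) = 2 ^ n"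
  using card_lists_length_eq[of "UNIV :: bool set" n] by simp

lemma sum_bit_strings_prod:
  fixes f :: "nat \<Rightarrow> bool \<Rightarrow> 'a :: comm_semiring_1"
  shows "(\<Sum>y\<in>bit_strings n. \<Prod>t<n. f t (y ! t)) = (\<Prod>t<n. f t True + f t False)"
proof (induction n arbitrary: f)
  case 0
  have "bit_strings 0 = {[]}" by auto
  thus ?case by simp
next
  case (Suc n)
  have cons: "bij_betw (\<lambda>(b, y). b # y) (UNIV \<times> bit_strings n) (bit_strings (Suc n))"
    by (auto simp: bij_betw_def inj_on_def length_Suc_conv)
  have "(\<Sum>y\<in>bit_strings (Suc n). \<Prod>t<Suc n. f t (y ! t))
      = (\<Sum>(b, y)\<in>UNIV \<times> bit_strings n. f 0 b * (\<Prod>t<n. f (Suc t) (y ! t)))"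
    by (subst sum.reindex_bij_betw[OF cons, symmetric])
       (simp add: case_prod_beta prod.lessThan_Suc_shift del: prod.lessThan_Suc)
  also have "\<dots> = (\<Sum>b\<in>UNIV. f 0 b * (\<Prod>t<n. f (Suc t) True + f (Suc t) False))"
    by (simp add: sum.cartesian_product[symmetric] sum_distrib_left[symmetric]
        Suc.IH[of "\<lambda>t. f (Suc t)"])
  also have "\<dots> = (\<Prod>t<Suc n. f t True + f t False)"
    by (simp add: UNIV_bool prod.lessThan_Suc_shift algebra_simps del: prod.lessThan_Suc)
  finally show ?case .
qed

definition sign_bit :: "nat \<Rightarrow> bool list \<Rightarrow> real" where
  "sign_bit t y = (if y ! t then 1 else -1)"

definition flip_bit :: "nat \<Rightarrow> bool list \<Rightarrow> bool list" where
  "flip_bit t y = y[t := \<not> y ! t]"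

lemma sum_bit_strings_flip_bit:
  assumes "t < n"
  shows "(\<Sum>y\<in>bit_strings n. F (flip_bit t y)) = (\<Sum>y\<in>bit_strings n. F y)"
  by (rule sum.reindex_bij_witness[where i = "flip_bit t" and j = "flip_bit t"])
     (use assms in \<open>auto simp: flip_bit_def\<close>)

lemma sum_update_True_minus_update_False:
  fixes F :: "bool list \<Rightarrow> real"
  assumes "t < n"
  shows "(\<Sum>y\<in>bit_strings n. F (y[t := True]) - F (y[t := False]))
       = 2 * (\<Sum>y\<in>bit_strings n. sign_bit t y * F y)"
proof -
  have pointwise: "F (y[t := True]) - F (y[t := False])
      = sign_bit t y * F y - sign_bit t y * F (flip_bit t y)"
    if "y \<in> bit_strings n" for y
    using that assms list_update_id[of y t]
    by (cases "y ! t") (auto simp: sign_bit_def flip_bit_def)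
  have "(\<Sum>y\<in>bit_strings n. sign_bit t y * F (flip_bit t y))
      = (\<Sum>y\<in>bit_strings n. (\<lambda>y. - sign_bit t y * F y) (flip_bit t y))"
    using assms by (intro sum.cong) (auto simp: sign_bit_def flip_bit_def)
  also have "\<dots> = - (\<Sum>y\<in>bit_strings n. sign_bit t y * F y)"
    by (subst sum_bit_strings_flip_bit[OF assms]) (simp add: sum_negf)
  finally show ?thesis
    by (simp add: pointwise sum_subtractf)
qed

lemma sum_sign_bit:
  assumes "t < n"
  shows "(\<Sum>y\<in>bit_strings n. sign_bit t y) = 0"
  using sum_update_True_minus_update_False[OF assms, of "\<lambda>_. 1"] by simp

lemma sum_exp_sign_bits_le:
  "(\<Sum>y\<in>bit_strings n. exp (\<Sum>t<n. sign_bit t y * a t)) \<le> 2 ^ n * exp ((\<Sum>t<n. (a t)\<^sup>2) / 2)"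
proof -
  have "(\<Sum>y\<in>bit_strings n. exp (\<Sum>t<n. sign_bit t y * a t))
      = (\<Sum>y\<in>bit_strings n. \<Prod>t<n. exp ((if y ! t then 1 else -1) * a t))"
    by (simp add: exp_sum sign_bit_def)
  also have "\<dots> = (\<Prod>t<n. exp (a t) + exp (- a t))"
    using sum_bit_strings_prod[of "\<lambda>t b. exp ((if b then 1 else -1) * a t)"] by simp
  also have "\<dots> \<le> (\<Prod>t<n. 2 * exp ((a t)\<^sup>2 / 2))"
    by (intro prod_mono) (simp add: exp_plus_exp_minus_le add_nonneg_nonneg)
  also have "\<dots> = 2 ^ n * exp ((\<Sum>t<n. (a t)\<^sup>2) / 2)"
    by (simp add: prod.distrib exp_sum sum_divide_distrib)
  finally show ?thesis .
qed

lemma sum_sum_mult_le_card_mult_ln: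
  fixes q Z :: "'y \<Rightarrow> 'm \<Rightarrow> real" and c :: real
  assumes "finite Y" "finite S" "c > 0"
    and q_nonneg: "\<And>y m. y \<in> Y \<Longrightarrow> m \<in> S \<Longrightarrow> 0 \<le> q y m"
    and q_sum: "\<And>y. y \<in> Y \<Longrightarrow> (\<Sum>m\<in>S. q y m) = 1"
    and exp_sum: "(\<Sum>y\<in>Y. \<Sum>m\<in>S. exp (Z y m)) \<le> card Y * c"
  shows "(\<Sum>y\<in>Y. \<Sum>m\<in>S. q y m * Z y m) \<le> card Y * ln c"
proof -
  have young: "c * (q y m * Z y m) \<le> c * q y m * ln c - c * q y m + exp (Z y m)"
    if "y \<in> Y" "m \<in> S" for y m
  proof -
    have "q y m \<le> (\<Sum>m\<in>S. q y m)"
      using that assms by (intro member_le_sum) auto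
    hence "q y m \<le> 1" using q_sum that by simp
    hence "c * q y m * ln (c * q y m) \<le> c * q y m * ln c"
      using q_nonneg[OF that] \<open>c > 0\<close>
      by (cases "q y m = 0") (auto simp: ln_mult intro!: mult_left_mono)
    moreover have "c * q y m * Z y m \<le> c * q y m * ln (c * q y m) - c * q y m + exp (Z y m)"
      using q_nonneg[OF that] \<open>c > 0\<close> by (intro mult_le_mult_ln_minus_plus_exp) simp
    ultimately show ?thesis by (simp add: mult.assoc)
  qed
  have "c * (\<Sum>y\<in>Y. \<Sum>m\<in>S. q y m * Z y m)
      \<le> (\<Sum>y\<in>Y. \<Sum>m\<in>S. c * q y m * ln c - c * q y m + exp (Z y m))"
    unfolding sum_distrib_left using young by (intro sum_mono) auto
  also have "\<dots> = (c * ln c - c) * (\<Sum>y\<in>Y. \<Sum>m\<in>S. q y m) + (\<Sum>y\<in>Y. \<Sum>m\<in>S. exp (Z y m))"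
    by (simp add: sum.distrib sum_subtractf sum_distrib_left algebra_simps)
  also have "\<dots> \<le> (c * ln c - c) * card Y + card Y * c"
    using q_sum exp_sum by simp
  also have "\<dots> = c * (card Y * ln c)"
    by (simp add: algebra_simps)
  finally show ?thesis
    using \<open>c > 0\<close> by simp
qed

text \<open>Centering \<open>h\<close> at 1/2 halves the range of the coefficients fed to Hoeffding's bound.\<close>

lemma sum_influence_eq:
  fixes q :: "bool list \<Rightarrow> 'm \<Rightarrow> real" and h :: "'m \<Rightarrow> nat \<Rightarrow> real"
  assumes q_sum: "\<And>y. y \<in> bit_strings n \<Longrightarrow> (\<Sum>m\<in>S. q y m) = 1"
  shows "(\<Sum>t<n. \<Sum>y\<in>bit_strings n. \<Sum>m\<in>S. (q (y[t := True]) m - q (y[t := False]) m) * h m t)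
       = 2 * (\<Sum>y\<in>bit_strings n. \<Sum>m\<in>S. q y m * (\<Sum>t<n. sign_bit t y * (h m t - 1/2)))"
proof -
  have single: "(\<Sum>y\<in>bit_strings n. \<Sum>m\<in>S. (q (y[t := True]) m - q (y[t := False]) m) * h m t)
      = 2 * (\<Sum>y\<in>bit_strings n. \<Sum>m\<in>S. q y m * sign_bit t y * (h m t - 1/2))" if "t < n" for t
  proof -
    have centred: "sign_bit t y * (\<Sum>m\<in>S. q y m * h m t)
        = (\<Sum>m\<in>S. q y m * sign_bit t y * (h m t - 1/2)) + sign_bit t y / 2"
      if "y \<in> bit_strings n" for y
    proof -
      have "(\<Sum>m\<in>S. q y m * sign_bit t y * (h m t - 1/2))
          = sign_bit t y * (\<Sum>m\<in>S. q y m * h m t) - sign_bit t y * (\<Sum>m\<in>S. q y m) / 2"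
        by (simp add: sum_distrib_left sum_subtractf algebra_simps flip: sum_divide_distrib)
      thus ?thesis using q_sum[OF that] by simp
    qed
    have "(\<Sum>y\<in>bit_strings n. \<Sum>m\<in>S. (q (y[t := True]) m - q (y[t := False]) m) * h m t)
        = 2 * (\<Sum>y\<in>bit_strings n. sign_bit t y * (\<Sum>m\<in>S. q y m * h m t))"
      using sum_update_True_minus_update_False[OF \<open>t < n\<close>, of "\<lambda>x. \<Sum>m\<in>S. q x m * h m t"]
      by (simp add: sum_subtractf left_diff_distrib)
    also have "\<dots> = 2 * (\<Sum>y\<in>bit_strings n. \<Sum>m\<in>S. q y m * sign_bit t y * (h m t - 1/2))
        + (\<Sum>y\<in>bit_strings n. sign_bit t y)"
      by (simp add: centred sum.distrib sum_divide_distrib[symmetric] distrib_left)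
    finally show ?thesis
      by (simp add: sum_sign_bit[OF that])
  qed
  show ?thesis
    by (simp add: single sum_distrib_left sum.swap[of _ "{..<n}"] mult.assoc mult.left_commute)
qed

lemma sum_influence_le:
  fixes q :: "bool list \<Rightarrow> 'm \<Rightarrow> real" and h :: "'m \<Rightarrow> nat \<Rightarrow> real" and \<theta> :: real
  assumes "finite S" "\<theta> > 0"
    and q_nonneg: "\<And>y m. y \<in> bit_strings n \<Longrightarrow> m \<in> S \<Longrightarrow> 0 \<le> q y m"
    and q_sum: "\<And>y. y \<in> bit_strings n \<Longrightarrow> (\<Sum>m\<in>S. q y m) = 1"
    and h_range: "\<And>m t. m \<in> S \<Longrightarrow> 0 \<le> h m t \<and> h m t \<le> 1"
  shows "(\<Sum>t<n. \<Sum>y\<in>bit_strings n. \<Sum>m\<in>S. (q (y[t := True]) m - q (y[t := False]) m) * h m t)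
         \<le> 2 ^ n * (2 * ln (card S) / \<theta> + n * \<theta> / 4)"
proof -
  define Z where "Z y m = \<theta> * (\<Sum>t<n. sign_bit t y * (h m t - 1/2))" for y m
  have "S \<noteq> {}" using q_sum[of "replicate n True"] by fastforce
  define c where "c = card S * exp (n * \<theta>\<^sup>2 / 8)"
  have c: "c > 0" using \<open>finite S\<close> \<open>S \<noteq> {}\<close> by (simp add: c_def card_gt_0_iff)
  have exp_Z: "(\<Sum>y\<in>bit_strings n. exp (Z y m)) \<le> 2 ^ n * exp (n * \<theta>\<^sup>2 / 8)" if "m \<in> S" for m
  proof -
    have "(\<theta> * (h m t - 1/2))\<^sup>2 \<le> \<theta>\<^sup>2 / 4" for t
    proof -
      have "(h m t - 1/2)\<^sup>2 \<le> (1/2)\<^sup>2"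
        using h_range[OF that, of t] by (intro abs_le_square_iff[THEN iffD1]) (auto simp: abs_if)
      from mult_left_mono[OF this, of "\<theta>\<^sup>2"] show ?thesis
        by (simp add: power_mult_distrib power_divide)
    qed
    hence "(\<Sum>t<n. (\<theta> * (h m t - 1/2))\<^sup>2) \<le> card {..<n} * (\<theta>\<^sup>2 / 4)"
      by (intro sum_bounded_above)
    hence "(\<Sum>t<n. (\<theta> * (h m t - 1/2))\<^sup>2) / 2 \<le> n * \<theta>\<^sup>2 / 8"
      by simp
    have "(\<Sum>y\<in>bit_strings n. exp (Z y m))
        \<le> 2 ^ n * exp ((\<Sum>t<n. (\<theta> * (h m t - 1/2))\<^sup>2) / 2)"
      using sum_exp_sign_bits_le[where a = "\<lambda>t. \<theta> * (h m t - 1/2)"]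
      by (simp add: Z_def sum_distrib_left mult.left_commute)
    also have "\<dots> \<le> 2 ^ n * exp (n * \<theta>\<^sup>2 / 8)"
      using \<open>(\<Sum>t<n. (\<theta> * (h m t - 1/2))\<^sup>2) / 2 \<le> n * \<theta>\<^sup>2 / 8\<close> by simp
    finally show ?thesis .
  qed
  have "(\<Sum>y\<in>bit_strings n. \<Sum>m\<in>S. exp (Z y m)) \<le> card (bit_strings n) * c"
    using sum_mono[OF exp_Z, of S]
    by (simp add: sum.swap[of _ S] card_bit_strings c_def mult_ac)
  hence "(\<Sum>y\<in>bit_strings n. \<Sum>m\<in>S. q y m * Z y m) \<le> 2 ^ n * ln c"
    using sum_sum_mult_le_card_mult_ln[OF finite_bit_strings \<open>finite S\<close> c, where q = q and Z = Z]
      q_nonneg q_sum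
    by (simp add: card_bit_strings)
  also have "ln c = ln (card S) + n * \<theta>\<^sup>2 / 8"
    using \<open>finite S\<close> \<open>S \<noteq> {}\<close> by (simp add: c_def ln_mult card_gt_0_iff)
  finally have "\<theta> * (\<Sum>y\<in>bit_strings n. \<Sum>m\<in>S. q y m * (\<Sum>t<n. sign_bit t y * (h m t - 1/2)))
      \<le> 2 ^ n * (ln (card S) + n * \<theta>\<^sup>2 / 8)"
    by (simp add: Z_def sum_distrib_left mult.left_commute)
  hence "2 * (\<Sum>y\<in>bit_strings n. \<Sum>m\<in>S. q y m * (\<Sum>t<n. sign_bit t y * (h m t - 1/2)))
      \<le> 2 ^ n * (2 * ln (card S) / \<theta> + n * \<theta> / 4)"
    using \<open>\<theta> > 0\<close> by (simp add: field_simps power2_eq_square)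
  thus ?thesis
    by (subst sum_influence_eq[OF q_sum])
qed

lemma integrable_pmf_family: "integrable (measure_pmf M) (\<lambda>a. pmf (f a) x)"
  by (intro measure_pmf.integrable_const_bound[where B = 1]) (auto simp: pmf_le_1)

lemma pmf_bind_ge:
  assumes "\<And>a. a \<in> set_pmf M \<Longrightarrow> c \<le> pmf (f a) x"
  shows "c \<le> pmf (bind_pmf M f) x"
  unfolding pmf_bind
  by (rule measure_pmf.integral_ge_const[OF integrable_pmf_family]) (auto intro!: AE_pmfI assms)

lemma pmf_bind_diff_le:
  assumes "\<And>a. a \<in> set_pmf M \<Longrightarrow> pmf (f a) x - pmf (g a) x \<le> d"
  shows "pmf (bind_pmf M f) x - pmf (bind_pmf M g) x \<le> d"
proof -
  have "pmf (bind_pmf M f) x - pmf (bind_pmf M g) x = (\<integral>a. pmf (f a) x - pmf (g a) x \<partial>M)"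
    unfolding pmf_bind by (simp add: Bochner_Integration.integral_diff integrable_pmf_family)
  also have "\<dots> \<le> d"
    by (rule measure_pmf.integral_le_const)
       (auto intro!: AE_pmfI assms integrable_diff integrable_pmf_family)
  finally show ?thesis .
qed

lemma pmf_bind_eq_sum:
  assumes "finite S" "set_pmf M \<subseteq> S"
  shows "pmf (bind_pmf M f) x = (\<Sum>m\<in>S. pmf (f m) x * pmf M m)"
  unfolding pmf_bind using assms by (subst integral_measure_pmf_real[where A = S]) auto

definition uniform_index :: "nat \<Rightarrow> nat pmf" where
  "uniform_index n = pmf_of_set {..<n}"

definition uniform_bits :: "nat \<Rightarrow> bool list pmf" where
  "uniform_bits n = pmf_of_set (bit_strings n)"

lemma set_pmf_uniform_index: "n \<ge> 1 \<Longrightarrow> set_pmf (uniform_index n) = {..<n}"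
  by (simp add: uniform_index_def lessThan_empty_iff)

lemma set_pmf_uniform_bits [simp]: "set_pmf (uniform_bits n) = bit_strings n"
  by (simp add: uniform_bits_def finite_bit_strings Ex_list_of_length)

lemma pmf_bind_uniform_index:
  "n \<ge> 1 \<Longrightarrow> pmf (bind_pmf (uniform_index n) f) x = (\<Sum>t<n. pmf (f t) x) / n"
  unfolding pmf_bind uniform_index_def
  by (subst integral_pmf_of_set) (auto simp: lessThan_empty_iff)

lemma pmf_bind_uniform_bits:
  "pmf (bind_pmf (uniform_bits n) f) x = (\<Sum>y\<in>bit_strings n. pmf (f y) x) / 2 ^ n"
  unfolding pmf_bind uniform_bits_def
  by (subst integral_pmf_of_set) (auto simp: finite_bit_strings card_bit_strings Ex_list_of_length)

definition index_game :: "nat \<Rightarrow> (bool list \<Rightarrow> 'm pmf) \<Rightarrow> ('m \<Rightarrow> nat \<Rightarrow> 'a pmf) \<Rightarrow> bool \<Rightarrow> 'a pmf"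
  where "index_game n g F b = bind_pmf (uniform_index n) (\<lambda>t. bind_pmf (uniform_bits n) (\<lambda>y.
           bind_pmf (g (y[t := b])) (\<lambda>m. F m t)))"

lemma index_advantage_le:
  fixes g :: "bool list \<Rightarrow> 'm pmf" and F :: "'m \<Rightarrow> nat \<Rightarrow> bool pmf"
  assumes "n \<ge> 1" "finite S" "\<theta> > 0"
    and g: "\<And>x. length x = n \<Longrightarrow> set_pmf (g x) \<subseteq> S"
  shows "pmf (index_game n g F True) True - pmf (index_game n g F False) True
         \<le> 2 * ln (card S) / (n * \<theta>) + \<theta> / 4"
proof -
  define q where "q x m = pmf (g x) m" for x m
  define h where "h m t = pmf (F m t) True" for m t
  have game: "pmf (index_game n g F b) True
      = (\<Sum>t<n. \<Sum>y\<in>bit_strings n. \<Sum>m\<in>S. q (y[t := b]) m * h m t) / (n * 2 ^ n)" for b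
    using assms(1,2) g
    by (simp add: index_game_def pmf_bind_uniform_index pmf_bind_uniform_bits pmf_bind_eq_sum
        h_def q_def mult_ac flip: sum_divide_distrib)
  have "(\<Sum>t<n. \<Sum>y\<in>bit_strings n. \<Sum>m\<in>S. (q (y[t := True]) m - q (y[t := False]) m) * h m t)
      \<le> 2 ^ n * (2 * ln (card S) / \<theta> + n * \<theta> / 4)"
    using assms(2,3) g
    by (intro sum_influence_le) (auto simp: q_def h_def pmf_le_1 intro: sum_pmf_eq_1)
  hence "(\<Sum>t<n. \<Sum>y\<in>bit_strings n. \<Sum>m\<in>S. (q (y[t := True]) m - q (y[t := False]) m) * h m t)
      / (n * 2 ^ n) \<le> 2 * ln (card S) / (n * \<theta>) + \<theta> / 4"
    using assms(1,3) by (simp add: field_simps)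
  thus ?thesis
    by (simp add: game diff_divide_distrib[symmetric] sum_subtractf[symmetric] left_diff_distrib)
qed

definition chain_step :: "chain_protocol \<Rightarrow> nat \<Rightarrow> bool list \<Rightarrow> nat \<Rightarrow> bool list \<Rightarrow> bool list pmf" where
  "chain_step P i x t m = (if i = 1 then chain_first P x else chain_mid P i x t m)"

lemma chain_msg_Suc:
  "chain_msg P xs ts (Suc i) =
     bind_pmf (chain_msg P xs ts i) (chain_step P (Suc i) (xs (Suc i)) (ts (Suc i)))"
  by (cases i) (simp_all add: chain_step_def[abs_def] bind_return_pmf)

lemma chain_msg_cong:
  "(\<And>l. l \<le> i \<Longrightarrow> xs l = xs' l \<and> ts l = ts' l) \<Longrightarrow> chain_msg P xs ts i = chain_msg P xs' ts' i"
  by (induction i) (simp_all add: chain_msg_Suc)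

lemma chain_input_extend:
  assumes "chain_input (Suc i) n xs ts" "length y = n" "t < n"
  shows "chain_input (Suc (Suc i)) n (xs(Suc i := y)) (ts(Suc (Suc i) := t))"
  using assms by (auto simp: chain_input_def)

lemma chain_case_extend:
  assumes "chain_case (Suc i) xs ts b" "t < length y"
  shows "chain_case (Suc (Suc i)) (xs(Suc i := y[t := b])) (ts(Suc (Suc i) := t)) b"
  using assms by (auto simp: chain_case_def)

lemma set_pmf_chain_step_length_le:
  assumes cost: "chain_cost_le P p n C" and "n \<ge> 1" "Suc i < p"
    and input: "chain_input (Suc i) n xs ts" and m: "m \<in> set_pmf (chain_msg P xs ts i)"
    and "length x = n"
  shows "set_pmf (chain_step P (Suc i) x (ts (Suc i)) m) \<subseteq> {m. length m \<le> C}"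
proof
  fix m' assume m': "m' \<in> set_pmf (chain_step P (Suc i) x (ts (Suc i)) m)"
  \<comment> \<open>any valid completion of the inputs makes \<^const>\<open>chain_cost_le\<close> applicable to this message\<close>
  define xs' where
    "xs' l = (if l = Suc i then x else if l \<le> i then xs l else replicate n False)" for l
  define ts' where "ts' l = (if l \<le> Suc i then ts l else 0)" for l
  have "chain_input p n xs' ts'"
    using input assms(2,6) by (auto simp: chain_input_def xs'_def ts'_def)
  moreover have "chain_msg P xs' ts' (Suc i)
      = bind_pmf (chain_msg P xs ts i) (chain_step P (Suc i) x (ts (Suc i)))"
    unfolding chain_msg_Suc by (subst chain_msg_cong[of i _ xs _ ts]) (auto simp: xs'_def ts'_def)
  hence "m' \<in> set_pmf (chain_msg P xs' ts' (Suc i))"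
    using m m' by auto
  moreover have "Suc i \<in> {1..p - 1}"
    using \<open>Suc i < p\<close> by simp
  ultimately show "m' \<in> {m. length m \<le> C}"
    using cost unfolding chain_cost_le_def by blast
qed

text \<open>Output distribution when player \<open>i\<close> holds message \<open>m\<close> and index \<open>t = t\<^sup>i\<close>, and
  players \<open>i, \<dots>, i + r\<close> act on fresh random inputs: \<open>x\<^sup>l\<close> is a uniform string whose bit
  at the uniform index \<open>t\<^sup>l\<^sup>+\<^sup>1\<close> is overwritten by \<open>\<beta> l\<close>.\<close>

fun hybrid_run ::
  "chain_protocol \<Rightarrow> nat \<Rightarrow> (nat \<Rightarrow> bool) \<Rightarrow> nat \<Rightarrow> nat \<Rightarrow> bool list \<Rightarrow> nat \<Rightarrow> bool pmf"
  where
  "hybrid_run P n \<beta> i 0 m t = chain_last P t m"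
| "hybrid_run P n \<beta> i (Suc r) m t =
     index_game n (\<lambda>x. chain_step P i x t m) (hybrid_run P n \<beta> (Suc i) r) (\<beta> i)"

lemma hybrid_run_cong:
  "(\<And>l. i \<le> l \<Longrightarrow> \<beta> l = \<beta>' l) \<Longrightarrow> hybrid_run P n \<beta> i r = hybrid_run P n \<beta>' i r"
proof (induction r arbitrary: i)
  case (Suc r)
  hence "hybrid_run P n \<beta> (Suc i) r = hybrid_run P n \<beta>' (Suc i) r" and "\<beta> i = \<beta>' i"
    by simp_all
  thus ?case by (intro ext) simp
qed (intro ext, simp)

definition hybrid_from ::
  "chain_protocol \<Rightarrow> nat \<Rightarrow> (nat \<Rightarrow> bool) \<Rightarrow> (nat \<Rightarrow> bool list) \<Rightarrow> (nat \<Rightarrow> nat) \<Rightarrow> nat \<Rightarrow> nat \<Rightarrow> bool pmf"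
  where "hybrid_from P n \<beta> xs ts i r =
           bind_pmf (chain_msg P xs ts i) (\<lambda>m. hybrid_run P n \<beta> (Suc i) r m (ts (Suc i)))"

lemma hybrid_from_Suc:
  "hybrid_from P n \<beta> xs ts i (Suc r) =
     bind_pmf (uniform_index n) (\<lambda>t. bind_pmf (uniform_bits n) (\<lambda>y.
       hybrid_from P n \<beta> (xs(Suc i := y[t := \<beta> (Suc i)])) (ts(Suc (Suc i) := t)) (Suc i) r))"
proof -
  let ?M = "chain_msg P xs ts i"
  let ?step = "\<lambda>t y m. chain_step P (Suc i) (y[t := \<beta> (Suc i)]) (ts (Suc i)) m"
  let ?rest = "\<lambda>t m'. hybrid_run P n \<beta> (Suc (Suc i)) r m' t"
  have "hybrid_from P n \<beta> xs ts i (Suc r) = bind_pmf ?M (\<lambda>m. bind_pmf (uniform_index n) (\<lambda>t.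
      bind_pmf (uniform_bits n) (\<lambda>y. bind_pmf (?step t y m) (?rest t))))"
    by (simp add: hybrid_from_def index_game_def)
  also have "\<dots> = bind_pmf (uniform_index n) (\<lambda>t. bind_pmf (uniform_bits n) (\<lambda>y.
      bind_pmf ?M (\<lambda>m. bind_pmf (?step t y m) (?rest t))))"
    by (subst bind_commute_pmf) (subst bind_commute_pmf, rule refl)
  also have "\<dots> = bind_pmf (uniform_index n) (\<lambda>t. bind_pmf (uniform_bits n) (\<lambda>y.
      hybrid_from P n \<beta> (xs(Suc i := y[t := \<beta> (Suc i)])) (ts(Suc (Suc i) := t)) (Suc i) r))"
    unfolding hybrid_from_def chain_msg_Suc
    by (subst chain_msg_cong[of i _ xs _ ts]) (simp_all add: bind_assoc_pmf)
  finally show ?thesis .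
qed

lemma hybrid_from_promise_ge:
  assumes success: "chain_success P p n (2/3)" and "n \<ge> 1"
  shows "Suc (i + r) = p \<Longrightarrow> chain_input (Suc i) n xs ts \<Longrightarrow> chain_case (Suc i) xs ts b
    \<Longrightarrow> (\<And>l. i < l \<Longrightarrow> l < p \<Longrightarrow> \<beta> l = b)
    \<Longrightarrow> 2/3 \<le> pmf (hybrid_from P n \<beta> xs ts i r) b"
proof (induction r arbitrary: i xs ts)
  case 0
  hence "hybrid_from P n \<beta> xs ts i 0 = chain_output P p xs ts"
    by (auto simp: hybrid_from_def chain_output_def)
  thus ?case using 0 success unfolding chain_success_def by auto
next
  case (Suc r)
  have "\<beta> (Suc i) = b" using Suc.prems by simp
  show ?case
    unfolding hybrid_from_Suc \<open>\<beta> (Suc i) = b\<close>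
  proof (intro pmf_bind_ge)
    fix t y assume "t \<in> set_pmf (uniform_index n)" "y \<in> set_pmf (uniform_bits n)"
    hence "t < n" "length y = n" using \<open>n \<ge> 1\<close> by (auto simp: set_pmf_uniform_index)
    hence extended: "chain_input (Suc (Suc i)) n (xs(Suc i := y[t := b])) (ts(Suc (Suc i) := t))"
      "chain_case (Suc (Suc i)) (xs(Suc i := y[t := b])) (ts(Suc (Suc i) := t)) b"
      using Suc.prems(2,3) by (simp_all add: chain_input_extend chain_case_extend)
    show "2/3 \<le> pmf (hybrid_from P n \<beta> (xs(Suc i := y[t := b])) (ts(Suc (Suc i) := t)) (Suc i) r) b"
      by (rule Suc.IH[OF _ extended]) (use Suc.prems(1,4) in auto)
  qed
qed

lemma hybrid_from_switch_diff_le: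
  assumes cost: "chain_cost_le P p n C" and "n \<ge> 1" "\<theta> > 0" "k < p"
    and agree: "\<And>l. l \<noteq> k \<Longrightarrow> \<beta>\<^sub>1 l = \<beta>\<^sub>2 l" and "\<beta>\<^sub>1 k" "\<not> \<beta>\<^sub>2 k"
  shows "Suc (i + r) = p \<Longrightarrow> Suc i \<le> k \<Longrightarrow> chain_input (Suc i) n xs ts
    \<Longrightarrow> pmf (hybrid_from P n \<beta>\<^sub>1 xs ts i r) True - pmf (hybrid_from P n \<beta>\<^sub>2 xs ts i r) True
        \<le> 2 * ln (card {m::bool list. length m \<le> C}) / (n * \<theta>) + \<theta> / 4"
proof (induction r arbitrary: i xs ts)
  case 0
  thus ?case using \<open>k < p\<close> by simp
next
  case (Suc r)
  show ?case
  proof (cases "Suc i < k")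
    case True
    hence same_bit: "\<beta>\<^sub>1 (Suc i) = \<beta>\<^sub>2 (Suc i)" using agree by simp
    show ?thesis
      unfolding hybrid_from_Suc same_bit
    proof (intro pmf_bind_diff_le)
      fix t y assume "t \<in> set_pmf (uniform_index n)" "y \<in> set_pmf (uniform_bits n)"
      let ?xs = "xs(Suc i := y[t := \<beta>\<^sub>2 (Suc i)])" and ?ts = "ts(Suc (Suc i) := t)"
      have extended: "chain_input (Suc (Suc i)) n ?xs ?ts"
        using Suc.prems(3) \<open>n \<ge> 1\<close> \<open>t \<in> _\<close> \<open>y \<in> _\<close>
        by (intro chain_input_extend) (auto simp: set_pmf_uniform_index)
      show "pmf (hybrid_from P n \<beta>\<^sub>1 ?xs ?ts (Suc i) r) True
          - pmf (hybrid_from P n \<beta>\<^sub>2 ?xs ?ts (Suc i) r) True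
          \<le> 2 * ln (card {m::bool list. length m \<le> C}) / (n * \<theta>) + \<theta> / 4"
        by (rule Suc.IH[OF _ _ extended]) (use Suc.prems(1) True in auto)
    qed
  next
    case False
    hence k: "k = Suc i" using Suc.prems(2) by simp
    have same_rest: "hybrid_run P n \<beta>\<^sub>1 (Suc k) r = hybrid_run P n \<beta>\<^sub>2 (Suc k) r"
      using agree by (intro hybrid_run_cong) simp
    show ?thesis
      unfolding hybrid_from_def hybrid_run.simps k[symmetric]
    proof (rule pmf_bind_diff_le)
      fix m assume "m \<in> set_pmf (chain_msg P xs ts i)"
      let ?g = "\<lambda>x. chain_step P k x (ts k) m"
      have "set_pmf (?g x) \<subseteq> {m. length m \<le> C}" if "length x = n" for x
        using set_pmf_chain_step_length_le[OF cost \<open>n \<ge> 1\<close>] Suc.prems(3) \<open>k < p\<close> \<open>m \<in> _\<close> that k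
        by blast
      from index_advantage_le[OF \<open>n \<ge> 1\<close> _ \<open>\<theta> > 0\<close> this, where F = "hybrid_run P n \<beta>\<^sub>2 (Suc k) r"]
      show "pmf (index_game n ?g (hybrid_run P n \<beta>\<^sub>1 (Suc k) r) (\<beta>\<^sub>1 k)) True
          - pmf (index_game n ?g (hybrid_run P n \<beta>\<^sub>2 (Suc k) r) (\<beta>\<^sub>2 k)) True
          \<le> 2 * ln (card {m::bool list. length m \<le> C}) / (n * \<theta>) + \<theta> / 4"
        using \<open>\<beta>\<^sub>1 k\<close> \<open>\<not> \<beta>\<^sub>2 k\<close> finite_lists_length_le[of "UNIV :: bool set" C]
        by (simp add: same_rest)
    qed
  qed
qed

lemma chain_one_third_le_hybrid_bound:
  assumes success: "chain_success P p n (2/3)" and cost: "chain_cost_le P p n C"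
    and "n \<ge> 1" "p \<ge> 1" "\<theta> > 0"
  shows "1/3 \<le> real (p - 1) * (2 * ln (card {m::bool list. length m \<le> C}) / (n * \<theta>) + \<theta> / 4)"
proof -
  define \<delta> where "\<delta> = 2 * ln (card {m::bool list. length m \<le> C}) / (n * \<theta>) + \<theta> / 4"
  define H where "H k = hybrid_from P n (\<lambda>l. l \<le> k) (\<lambda>_. []) (\<lambda>_. 0) 0 (p - 1)" for k
  have input: "chain_input (Suc 0) n xs ts" and promise: "chain_case (Suc 0) xs ts b" for xs ts b
    by (simp_all add: chain_input_def chain_case_def)
  have "2/3 \<le> pmf (H (p - 1)) True"
    unfolding H_def using \<open>p \<ge> 1\<close>
    by (intro hybrid_from_promise_ge[OF success \<open>n \<ge> 1\<close> _ input promise]) auto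
  moreover have "2/3 \<le> pmf (H 0) False"
    unfolding H_def using \<open>p \<ge> 1\<close>
    by (intro hybrid_from_promise_ge[OF success \<open>n \<ge> 1\<close> _ input promise]) auto
  moreover have "pmf (H (Suc k)) True - pmf (H k) True \<le> \<delta>" if "k < p - 1" for k
    unfolding H_def \<delta>_def using that
    by (intro hybrid_from_switch_diff_le[OF cost \<open>n \<ge> 1\<close> \<open>\<theta> > 0\<close>, of "Suc k"] input) auto
  hence "(\<Sum>k<p - 1. pmf (H (Suc k)) True - pmf (H k) True) \<le> (\<Sum>k<p - 1. \<delta>)"
    by (intro sum_mono) simp
  hence "pmf (H (p - 1)) True - pmf (H 0) True \<le> (p - 1) * \<delta>"
    by (simp add: sum_lessThan_telescope[of "\<lambda>k. pmf (H k) True"])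
  ultimately show ?thesis
    unfolding \<delta>_def pmf_False_conv_True by linarith
qed

lemma ln_card_bool_lists_length_le: "ln (card {m::bool list. length m \<le> C}) \<le> 2 * C"
proof -
  have "card {m::bool list. length m \<le> C} = (\<Sum>i\<le>C. 2 ^ i)"
    using card_lists_length_le[of "UNIV :: bool set" C] by simp
  also have "\<dots> \<le> (4::nat) ^ C"
  proof (induction C)
    case (Suc C)
    have "(2::nat) ^ C \<le> 4 ^ C" by (simp add: power_mono)
    thus ?case using Suc.IH by simp
  qed simp
  finally have "real (card {m::bool list. length m \<le> C}) \<le> 4 ^ C"
    by (simp flip: of_nat_le_iff)
  moreover have "card {m::bool list. length m \<le> C} \<noteq> 0"
    using finite_lists_length_le[of "UNIV :: bool set" C]
    by (auto simp: card_eq_0_iff intro: exI[of _ "[]"])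
  ultimately have "ln (card {m::bool list. length m \<le> C}) \<le> C * ln 4"
    by (simp add: ln_realpow[symmetric])
  also have "\<dots> \<le> real C * 2"
    using ln_2_less_1 ln_realpow[of 2 2] by (intro mult_left_mono) simp_all
  finally show ?thesis
    by simp
qed

theorem theorem11:
  fixes P :: chain_protocol and n p C :: nat
  assumes "n \<ge> 1" and "p \<ge> 2"
    and "chain_success P p n (2/3)"
    and "chain_cost_le P p n C"
  shows "real C \<ge> real n / (36 * real p ^ 2)"
proof (rule ccontr)
  let ?K = "card {m::bool list. length m \<le> C}"
  define \<theta> where "\<theta> = 2 / (3 * real p)"
  have p: "real p \<ge> 2" and n: "real n \<ge> 1" using assms(1,2) by simp_all
  assume "\<not> ?thesis"
  hence "36 * real p ^ 2 * C < n"
    using p by (simp add: field_simps)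
  hence "3 * p * (2 * C) / n < 1 / (6 * p)"
    using p n by (simp add: field_simps power2_eq_square)
  moreover have "2 * ln ?K / (n * \<theta>) \<le> 3 * p * (2 * C) / n"
    using ln_card_bool_lists_length_le[of C] p n
    by (simp add: \<theta>_def field_simps)
  moreover have "\<theta> / 4 = 1 / (6 * p)" and "1 / (6 * p) + 1 / (6 * p) = 1 / (3 * real p)"
    by (simp_all add: \<theta>_def)
  ultimately have gap: "2 * ln ?K / (n * \<theta>) + \<theta> / 4 < 1 / (3 * p)"
    by linarith
  have "1/3 \<le> real (p - 1) * (2 * ln ?K / (n * \<theta>) + \<theta> / 4)"
    using assms p by (intro chain_one_third_le_hybrid_bound) (auto simp: \<theta>_def)
  also have "\<dots> < real (p - 1) * (1 / (3 * p))"
    using gap assms(2) by (intro mult_strict_left_mono) auto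
  also have "\<dots> < 1/3"
    using p by (simp add: field_simps)
  finally have "(1::real) / 3 < 1 / 3" .
  thus False by simp
qed

end
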